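(* The class of matroids satisfying the symmetric strong circuit elimination property is closed under series minors: if $M$ satisfies it and $N$ is a series minor of $M$, then $N$ satisfies it.
   Context: A matroid $M$ has the symmetric strong circuit elimination property if, whenever $C_1$ and $C_2$ are circuits of $M$ and $e_1,e_2,e$ are elements with $e_1\in C_1-C_2$, $e_2\in C_2-C_1$ and $e\in C_1\cap C_2$, there is a circuit $C_3$ of $M$ with $\{e_1,e_2\}\subseteq C_3\subseteq (C_1\cup C_2)-e$. A series contraction of $M$ is the contraction $M/f$ of an element $f$ for which there is $g$ with $\{f,g\}$ a cocircuit of $M$; a matroid $N$ is a series minor of $M$ if $N$ can be obtained from $M$ by a sequence of deletions and series contractions. *)

theory Defs
  imports Main
begin

type_synonym 'a matroid = "'a set \<times> 'a set set"

definition ground :: "'a matroid \<Rightarrow> 'a set" where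
  "ground M = fst M"

definition circuits :: "'a matroid \<Rightarrow> 'a set set" where
  "circuits M = snd M"

definition matroid :: "'a matroid \<Rightarrow> bool" where
  "matroid M \<longleftrightarrow> finite (ground M)
     \<and> (\<forall>C\<in>circuits M. C \<subseteq> ground M)
     \<and> {} \<notin> circuits M
     \<and> (\<forall>C1\<in>circuits M. \<forall>C2\<in>circuits M. C1 \<subseteq> C2 \<longrightarrow> C1 = C2)
     \<and> (\<forall>C1\<in>circuits M. \<forall>C2\<in>circuits M. \<forall>e. C1 \<noteq> C2 \<and> e \<in> C1 \<inter> C2 \<longrightarrow>
          (\<exists>C3\<in>circuits M. C3 \<subseteq> (C1 \<union> C2) - {e}))"

definition indep :: "'a matroid \<Rightarrow> 'a set \<Rightarrow> bool" where
  "indep M I \<longleftrightarrow> I \<subseteq> ground M \<and> (\<forall>C\<in>circuits M. \<not> C \<subseteq> I)"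

definition basis :: "'a matroid \<Rightarrow> 'a set \<Rightarrow> bool" where
  "basis M B \<longleftrightarrow> indep M B \<and> (\<forall>I. indep M I \<and> B \<subseteq> I \<longrightarrow> I = B)"

definition cocircuit :: "'a matroid \<Rightarrow> 'a set \<Rightarrow> bool" where
  "cocircuit M D \<longleftrightarrow> D \<subseteq> ground M \<and> (\<forall>B. basis M B \<longrightarrow> D \<inter> B \<noteq> {})
     \<and> (\<forall>D'. D' \<subset> D \<longrightarrow> (\<exists>B. basis M B \<and> D' \<inter> B = {}))"

definition del :: "'a matroid \<Rightarrow> 'a \<Rightarrow> 'a matroid" where
  "del M e = (ground M - {e}, {C \<in> circuits M. e \<notin> C})"

definition contr :: "'a matroid \<Rightarrow> 'a \<Rightarrow> 'a matroid" where
  "contr M f = (ground M - {f},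
     {X. X \<noteq> {} \<and> (\<exists>C\<in>circuits M. X = C - {f})
        \<and> (\<forall>C\<in>circuits M. C - {f} \<noteq> {} \<and> C - {f} \<subseteq> X \<longrightarrow> C - {f} = X)})"

inductive series_minor :: "'a matroid \<Rightarrow> 'a matroid \<Rightarrow> bool" where
  refl: "series_minor M M"
| delete: "series_minor M N \<Longrightarrow> e \<in> ground N \<Longrightarrow> series_minor M (del N e)"
| series_contract: "series_minor M N \<Longrightarrow> cocircuit N {f, g} \<Longrightarrow> series_minor M (contr N f)"

definition sym_strong_elim :: "'a matroid \<Rightarrow> bool" where
  "sym_strong_elim M \<longleftrightarrow>
     (\<forall>C1\<in>circuits M. \<forall>C2\<in>circuits M. \<forall>e1 e2 e.
        e1 \<in> C1 - C2 \<and> e2 \<in> C2 - C1 \<and> e \<in> C1 \<inter> C2 \<longrightarrow>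
        (\<exists>C3\<in>circuits M. {e1, e2} \<subseteq> C3 \<and> C3 \<subseteq> (C1 \<union> C2) - {e}))"

end

theory Submission
  imports Defs
begin

text \<open>Deleting an element keeps exactly the circuits avoiding it, so the symmetric strong
  elimination property passes to deletions. If \<open>{f, g}\<close> is a cocircuit, orthogonality of
  circuits and cocircuits (a circuit never meets a cocircuit in a single element) shows that
  a circuit contains \<open>f\<close> only together with \<open>g \<noteq> f\<close>. Hence \<open>C \<mapsto> C - {f}\<close> is an
  order isomorphism from the circuits of \<open>M\<close> onto those of \<open>M / f\<close>, and every elimination
  in \<open>M\<close> descends to \<open>M / f\<close>. Orthogonality itself rests on strong circuit elimination,
  which is derived from the weak elimination axiom.\<close>

lemma matroid_finite_ground: "matroid M \<Longrightarrow> finite (ground M)"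
  unfolding matroid_def by (elim conjE)

lemma matroid_circuit_subset_ground: "matroid M \<Longrightarrow> C \<in> circuits M \<Longrightarrow> C \<subseteq> ground M"
  unfolding matroid_def by (elim conjE) blast

lemma matroid_empty_not_circuit: "matroid M \<Longrightarrow> {} \<notin> circuits M"
  unfolding matroid_def by (elim conjE)

lemma matroid_circuit_subset_eq:
  "matroid M \<Longrightarrow> C1 \<in> circuits M \<Longrightarrow> C2 \<in> circuits M \<Longrightarrow> C1 \<subseteq> C2 \<Longrightarrow> C1 = C2"
  unfolding matroid_def by (elim conjE) metis

lemma matroid_circuit_elim:
  "matroid M \<Longrightarrow> C1 \<in> circuits M \<Longrightarrow> C2 \<in> circuits M \<Longrightarrow> C1 \<noteq> C2 \<Longrightarrow> e \<in> C1 \<inter> C2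
    \<Longrightarrow> \<exists>C3\<in>circuits M. C3 \<subseteq> (C1 \<union> C2) - {e}"
  unfolding matroid_def by (elim conjE) metis

lemma matroidI:
  assumes "finite (ground M)" "\<And>C. C \<in> circuits M \<Longrightarrow> C \<subseteq> ground M" "{} \<notin> circuits M"
    "\<And>C1 C2. C1 \<in> circuits M \<Longrightarrow> C2 \<in> circuits M \<Longrightarrow> C1 \<subseteq> C2 \<Longrightarrow> C1 = C2"
    "\<And>C1 C2 e. C1 \<in> circuits M \<Longrightarrow> C2 \<in> circuits M \<Longrightarrow> C1 \<noteq> C2 \<Longrightarrow> e \<in> C1 \<inter> C2
      \<Longrightarrow> \<exists>C3\<in>circuits M. C3 \<subseteq> (C1 \<union> C2) - {e}"
  shows "matroid M"
  unfolding matroid_def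
proof (intro conjI ballI allI impI)
  fix C1 C2 e assume "C1 \<in> circuits M" "C2 \<in> circuits M" "C1 \<noteq> C2 \<and> e \<in> C1 \<inter> C2"
  then show "\<exists>C3\<in>circuits M. C3 \<subseteq> (C1 \<union> C2) - {e}" using assms(5) by simp
qed (use assms(1-4) in auto)

lemma sym_strong_elimD:
  assumes "sym_strong_elim M" "C1 \<in> circuits M" "C2 \<in> circuits M"
    "e1 \<in> C1 - C2" "e2 \<in> C2 - C1" "e \<in> C1 \<inter> C2"
  shows "\<exists>C3\<in>circuits M. {e1, e2} \<subseteq> C3 \<and> C3 \<subseteq> (C1 \<union> C2) - {e}"
  using assms unfolding sym_strong_elim_def by simp

lemma indep_subset_ground: "indep M I \<Longrightarrow> I \<subseteq> ground M"
  unfolding indep_def by (elim conjE)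

lemma indep_subset: "indep M I \<Longrightarrow> J \<subseteq> I \<Longrightarrow> indep M J"
  unfolding indep_def by blast

lemma basis_indep: "basis M B \<Longrightarrow> indep M B"
  unfolding basis_def by (elim conjE)

lemma basis_insert_dependent: "basis M B \<Longrightarrow> z \<notin> B \<Longrightarrow> \<not> indep M (insert z B)"
  unfolding basis_def by blast

lemma cocircuit_inter_basis: "cocircuit M D \<Longrightarrow> basis M B \<Longrightarrow> D \<inter> B \<noteq> {}"
  unfolding cocircuit_def by (elim conjE) blast

lemma cocircuit_psubset_avoids_basis:
  "cocircuit M D \<Longrightarrow> D' \<subset> D \<Longrightarrow> \<exists>B. basis M B \<and> D' \<inter> B = {}"
  unfolding cocircuit_def by (elim conjE) blast

text \<open>Induction on \<open>|C1 \<union> C2|\<close>: if weak elimination drops \<open>f\<close>, the new circuit \<open>C3\<close> meets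
  \<open>C2 - C1\<close> in some \<open>g\<close>; strong elimination of \<open>g\<close> from \<open>C2, C3\<close>, and then of \<open>e\<close> from
  \<open>C1\<close> and the resulting circuit, takes place in strictly smaller unions.\<close>

lemma matroid_strong_circuit_elim:
  assumes M: "matroid M"
  shows "C1 \<in> circuits M \<Longrightarrow> C2 \<in> circuits M \<Longrightarrow> e \<in> C1 \<inter> C2 \<Longrightarrow> f \<in> C1 - C2
    \<Longrightarrow> \<exists>C3\<in>circuits M. f \<in> C3 \<and> C3 \<subseteq> (C1 \<union> C2) - {e}"
proof (induction "card (C1 \<union> C2)" arbitrary: C1 C2 e f rule: less_induct)
  case less
  note C1 = less.prems(1) and C2 = less.prems(2)
  have fin: "finite (C1 \<union> C2)"
    using M C1 C2 matroid_finite_ground matroid_circuit_subset_ground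
    by (metis finite_Un finite_subset)
  obtain C3 where C3: "C3 \<in> circuits M" "C3 \<subseteq> (C1 \<union> C2) - {e}"
    using matroid_circuit_elim[OF M C1 C2] less.prems(3,4) by blast
  show ?case
  proof (cases "f \<in> C3")
    case True
    then show ?thesis using C3 by blast
  next
    case False
    have "\<not> C3 \<subseteq> C1"
      using matroid_circuit_subset_eq[OF M C3(1) C1] C3(2) less.prems(3) by blast
    then obtain g where g: "g \<in> C3" "g \<in> C2 - C1" using C3(2) by blast
    have "card (C2 \<union> C3) < card (C1 \<union> C2)"
      using fin C3(2) False less.prems(4) by (intro psubset_card_mono) auto
    then obtain C4 where C4: "C4 \<in> circuits M" "e \<in> C4" "C4 \<subseteq> (C2 \<union> C3) - {g}"
      using less.hyps[OF _ C2 C3(1), of g e] g less.prems(3) C3(2) by blast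
    have "card (C1 \<union> C4) < card (C1 \<union> C2)"
      using fin C3(2) C4(3) g by (intro psubset_card_mono) auto
    then obtain C5 where C5: "C5 \<in> circuits M" "f \<in> C5" "C5 \<subseteq> (C1 \<union> C4) - {e}"
      using less.hyps[OF _ C1 C4(1), of e f] C4 C3(2) g False less.prems(3,4) by blast
    show ?thesis using C5 C4(3) C3(2) by blast
  qed
qed

text \<open>For \<open>z \<notin> J\<close>, \<open>spanned M J z\<close> says that \<open>z\<close> lies in the closure of \<open>J\<close>.\<close>

definition spanned :: "'a matroid \<Rightarrow> 'a set \<Rightarrow> 'a \<Rightarrow> bool" where
  "spanned M J z \<longleftrightarrow> (\<exists>C\<in>circuits M. z \<in> C \<and> C \<subseteq> insert z J)"

lemma spanned_if_circuit_outside_spanned: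
  assumes M: "matroid M" and z: "z \<notin> J" and Y: "\<And>y. y \<in> Y \<Longrightarrow> spanned M J y"
  shows "C \<in> circuits M \<Longrightarrow> z \<in> C \<Longrightarrow> C - insert z J \<subseteq> Y \<Longrightarrow> spanned M J z"
proof (induction "card (C - insert z J)" arbitrary: C rule: less_induct)
  case less
  show ?case
  proof (cases "C \<subseteq> insert z J")
    case True
    then show ?thesis using less.prems unfolding spanned_def by blast
  next
    case False
    then obtain y where y: "y \<in> C" "y \<notin> insert z J" by blast
    then obtain Cy where Cy: "Cy \<in> circuits M" "y \<in> Cy" "Cy \<subseteq> insert y J"
      using Y less.prems(3) unfolding spanned_def by blast
    have "z \<notin> Cy" using Cy(3) y(2) z by blast
    then obtain C' where C': "C' \<in> circuits M" "z \<in> C'" "C' \<subseteq> (C \<union> Cy) - {y}"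
      using matroid_strong_circuit_elim[OF M less.prems(1) Cy(1), of y z] y(1) Cy(2) less.prems(2)
      by blast
    have "finite C" using M less.prems(1) matroid_finite_ground matroid_circuit_subset_ground
      by (metis finite_subset)
    moreover have "C' - insert z J \<subset> C - insert z J" using C'(3) Cy(3) y by blast
    ultimately have "card (C' - insert z J) < card (C - insert z J)"
      by (meson finite_Diff psubset_card_mono)
    moreover have "C' - insert z J \<subseteq> Y" using C'(3) Cy(3) less.prems(3) by blast
    ultimately show ?thesis using less.hyps C'(1,2) by blast
  qed
qed

lemma spanned_if_dependent_insert:
  assumes "indep M J" "z \<in> ground M" "\<not> indep M (insert z J)"
  shows "spanned M J z"
proof -
  obtain C where "C \<in> circuits M" "C \<subseteq> insert z J"
    using assms unfolding indep_def by blast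
  moreover have "z \<in> C" using calculation assms(1) unfolding indep_def by blast
  ultimately show ?thesis unfolding spanned_def by blast
qed

lemma basis_if_spans_ground:
  assumes J: "indep M J" and spans: "\<And>z. z \<in> ground M - J \<Longrightarrow> spanned M J z"
  shows "basis M J"
  unfolding basis_def
proof (intro conjI allI impI J)
  fix I assume I: "indep M I \<and> J \<subseteq> I"
  show "I = J"
  proof (rule ccontr)
    assume "I \<noteq> J"
    then obtain z where z: "z \<in> I - J" using I by blast
    then have "z \<in> ground M" using I unfolding indep_def by blast
    then obtain C where "C \<in> circuits M" "C \<subseteq> insert z J"
      using spans z unfolding spanned_def by blast
    then show False using I z unfolding indep_def by blast
  qed
qed

lemma indep_extend_maximal:
  assumes "finite S" "indep M I" "I \<subseteq> S"
  obtains J where "indep M J" "I \<subseteq> J" "J \<subseteq> S" "\<And>z. z \<in> S - J \<Longrightarrow> \<not> indep M (insert z J)"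
proof -
  let ?F = "{J. indep M J \<and> I \<subseteq> J \<and> J \<subseteq> S}"
  have "finite ?F" using assms(1) by (simp add: finite_subset)
  moreover have "I \<in> ?F" using assms(2,3) by simp
  ultimately have "\<exists>J\<in>?F. I \<le> J \<and> (\<forall>J'\<in>?F. J \<le> J' \<longrightarrow> J = J')"
    by (rule finite_has_maximal2)
  then obtain J where J: "J \<in> ?F" and max: "\<forall>J'\<in>?F. J \<le> J' \<longrightarrow> J = J'"
    by blast
  have maximal: "\<not> indep M (insert z J)" if "z \<in> S - J" for z
  proof
    assume "indep M (insert z J)"
    then have "insert z J \<in> ?F" using J that by auto
    then show False using max that by auto
  qed
  show ?thesis using that[OF _ _ _ maximal] J by simp
qed

lemma basis_if_spans_basis_element:
  assumes M: "matroid M" and B: "basis M B" and J: "indep M J" "B - {x} \<subseteq> J"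
    and x: "x \<notin> J" "spanned M J x"
  shows "basis M J"
proof (rule basis_if_spans_ground[OF J(1)])
  fix z assume z: "z \<in> ground M - J"
  show "spanned M J z"
  proof (cases "z = x")
    case True
    then show ?thesis using x(2) by simp
  next
    case False
    then have "z \<notin> B" using J(2) z by blast
    then have "spanned M B z"
      using spanned_if_dependent_insert[OF basis_indep[OF B] _ basis_insert_dependent[OF B]] z
      by blast
    then obtain Cz where Cz: "Cz \<in> circuits M" "z \<in> Cz" "Cz \<subseteq> insert z B"
      unfolding spanned_def by blast
    have "Cz - insert z J \<subseteq> {x}" using Cz(3) J(2) by blast
    then show ?thesis
      using spanned_if_circuit_outside_spanned[OF M _ _ Cz(1,2)] x(2) z by blast
  qed
qed

text \<open>If \<open>C \<inter> D = {x}\<close>, take a basis \<open>B\<close> avoiding \<open>D - {x}\<close> and extend \<open>B - {x}\<close> to a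
  maximal independent subset \<open>J\<close> of \<open>(B \<union> C) - {x}\<close>, a set disjoint from \<open>D\<close>. Then \<open>J\<close>
  spans \<open>C - {x}\<close>, hence \<open>x\<close>, hence everything; so it is a basis missing \<open>D\<close>.\<close>

lemma circuit_cocircuit_inter_not_singleton:
  assumes M: "matroid M" and D: "cocircuit M D" and C: "C \<in> circuits M"
  shows "C \<inter> D \<noteq> {x}"
proof
  assume CD: "C \<inter> D = {x}"
  then have "D - {x} \<subset> D" by blast
  then obtain B where B: "basis M B" "(D - {x}) \<inter> B = {}"
    using cocircuit_psubset_avoids_basis[OF D] by blast
  have B_indep: "indep M B" using basis_indep[OF B(1)] .
  define S where "S = (B - {x}) \<union> (C - {x})"
  have S_D: "S \<inter> D = {}" using B(2) CD unfolding S_def by blast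
  have S_ground: "S \<subseteq> ground M"
    using indep_subset_ground[OF B_indep] matroid_circuit_subset_ground[OF M C]
    unfolding S_def by blast
  have "finite S" using S_ground matroid_finite_ground[OF M] by (rule finite_subset)
  moreover have "indep M (B - {x})" using indep_subset[OF B_indep] by blast
  moreover have "B - {x} \<subseteq> S" unfolding S_def by blast
  ultimately obtain J where J: "indep M J" "B - {x} \<subseteq> J" "J \<subseteq> S"
    and J_max: "\<And>z. z \<in> S - J \<Longrightarrow> \<not> indep M (insert z J)"
    using indep_extend_maximal by blast
  have "x \<notin> J" using J(3) S_D CD by blast
  have spanned_S: "spanned M J y" if "y \<in> S - J" for y
    using spanned_if_dependent_insert[OF J(1) _ J_max[OF that]] that S_ground by blast
  have "C - insert x J \<subseteq> S - J" using CD unfolding S_def by blast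
  then have "spanned M J x"
    using spanned_if_circuit_outside_spanned[OF M \<open>x \<notin> J\<close> spanned_S C] CD by blast
  then have "basis M J"
    using basis_if_spans_basis_element[OF M B(1) J(1,2) \<open>x \<notin> J\<close>] by blast
  then have "D \<inter> J \<noteq> {}" by (rule cocircuit_inter_basis[OF D])
  then show False using J(3) S_D by blast
qed

lemma ground_del [simp]: "ground (del M e) = ground M - {e}"
  unfolding del_def ground_def by simp

lemma circuits_del [simp]: "circuits (del M e) = {C \<in> circuits M. e \<notin> C}"
  unfolding del_def circuits_def by simp

lemma matroid_del:
  assumes M: "matroid M"
  shows "matroid (del M e)"
proof (rule matroidI)
  fix C1 C2 x
  assume "C1 \<in> circuits (del M e)" "C2 \<in> circuits (del M e)" "C1 \<noteq> C2" "x \<in> C1 \<inter> C2"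
  then show "\<exists>C3\<in>circuits (del M e). C3 \<subseteq> (C1 \<union> C2) - {x}"
    using matroid_circuit_elim[OF M, of C1 C2 x] by auto
qed (use matroid_finite_ground[OF M] matroid_circuit_subset_ground[OF M]
      matroid_empty_not_circuit[OF M] matroid_circuit_subset_eq[OF M] in auto)

lemma sym_strong_elim_del:
  assumes S: "sym_strong_elim M"
  shows "sym_strong_elim (del M e)"
  unfolding sym_strong_elim_def
proof (intro ballI allI impI)
  fix C1 C2 e1 e2 x
  assume "C1 \<in> circuits (del M e)" "C2 \<in> circuits (del M e)"
    "e1 \<in> C1 - C2 \<and> e2 \<in> C2 - C1 \<and> x \<in> C1 \<inter> C2"
  then show "\<exists>C3\<in>circuits (del M e). {e1, e2} \<subseteq> C3 \<and> C3 \<subseteq> (C1 \<union> C2) - {x}"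
    using sym_strong_elimD[OF S, of C1 C2 e1 e2 x] by auto
qed

lemma series_pair_circuit:
  assumes "matroid M" "cocircuit M {f, g}" "C \<in> circuits M" "f \<in> C"
  shows "g \<in> C" "g \<noteq> f"
proof -
  have "C \<inter> {f, g} \<noteq> {f}"
    using circuit_cocircuit_inter_not_singleton[OF assms(1-3)] .
  then show "g \<in> C" "g \<noteq> f" using assms(4) by auto
qed

lemma series_circuit_diff_subset:
  assumes M: "matroid M" and fg: "cocircuit M {f, g}"
    and C: "C \<in> circuits M" and C': "C' \<in> circuits M" and sub: "C' - {f} \<subseteq> C - {f}"
  shows "C' = C"
proof -
  have "f \<in> C" if "f \<in> C'"
  proof -
    have "g \<in> C" using series_pair_circuit[OF M fg C' that] sub by blast
    then show ?thesis using series_pair_circuit[OF M _ C] fg by (metis insert_commute)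
  qed
  then have "C' \<subseteq> C" using sub by blast
  then show ?thesis by (rule matroid_circuit_subset_eq[OF M C' C])
qed

lemma series_circuit_diff_nonempty:
  assumes M: "matroid M" and fg: "cocircuit M {f, g}" and C: "C \<in> circuits M"
  shows "C - {f} \<noteq> {}"
proof
  assume "C - {f} = {}"
  moreover have "C \<noteq> {}" using C matroid_empty_not_circuit[OF M] by blast
  ultimately have "f \<in> C" by blast
  then show False using series_pair_circuit[OF M fg C] \<open>C - {f} = {}\<close> by blast
qed

lemma circuits_contr_series:
  assumes M: "matroid M" and fg: "cocircuit M {f, g}"
  shows "circuits (contr M f) = (\<lambda>C. C - {f}) ` circuits M"
proof -
  have "X \<in> circuits (contr M f) \<longleftrightarrow> (\<exists>C\<in>circuits M. X = C - {f})" for X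
  proof
    assume "X \<in> circuits (contr M f)"
    then show "\<exists>C\<in>circuits M. X = C - {f}" unfolding contr_def circuits_def by auto
  next
    assume "\<exists>C\<in>circuits M. X = C - {f}"
    then obtain C where C: "C \<in> circuits M" "X = C - {f}" by blast
    then have "C' - {f} = X" if "C' \<in> circuits M" "C' - {f} \<subseteq> X" for C'
      using series_circuit_diff_subset[OF M fg C(1) that(1)] that(2) C(2) by simp
    moreover have "X \<noteq> {}" using series_circuit_diff_nonempty[OF M fg C(1)] C(2) by simp
    ultimately show "X \<in> circuits (contr M f)"
      using C unfolding contr_def circuits_def by auto
  qed
  then show ?thesis by blast
qed

lemma circuits_contr_seriesE:
  assumes "matroid M" "cocircuit M {f, g}" "X \<in> circuits (contr M f)"
  obtains C where "X = C - {f}" "C \<in> circuits M"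
  using assms(3) unfolding circuits_contr_series[OF assms(1,2)] by (rule imageE)

lemma diff_in_circuits_contr_series:
  "matroid M \<Longrightarrow> cocircuit M {f, g} \<Longrightarrow> C \<in> circuits M \<Longrightarrow> C - {f} \<in> circuits (contr M f)"
  unfolding circuits_contr_series by (rule imageI)

lemma ground_contr [simp]: "ground (contr M f) = ground M - {f}"
  unfolding contr_def ground_def by simp

lemma matroid_contr_series:
  assumes M: "matroid M" and fg: "cocircuit M {f, g}"
  shows "matroid (contr M f)"
proof (rule matroidI)
  show "finite (ground (contr M f))" using matroid_finite_ground[OF M] by simp
  show "X \<subseteq> ground (contr M f)" if "X \<in> circuits (contr M f)" for X
  proof (rule circuits_contr_seriesE[OF M fg that])
    fix C assume "X = C - {f}" "C \<in> circuits M"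
    then show ?thesis using matroid_circuit_subset_ground[OF M] by auto
  qed
  show "{} \<notin> circuits (contr M f)"
    using series_circuit_diff_nonempty[OF M fg] circuits_contr_seriesE[OF M fg] by metis
  show "X1 = X2" if "X1 \<in> circuits (contr M f)" "X2 \<in> circuits (contr M f)" "X1 \<subseteq> X2" for X1 X2
    using that series_circuit_diff_subset[OF M fg] circuits_contr_seriesE[OF M fg] by metis
  fix X1 X2 x
  assume X: "X1 \<in> circuits (contr M f)" "X2 \<in> circuits (contr M f)" "X1 \<noteq> X2" "x \<in> X1 \<inter> X2"
  obtain C1 C2 where C: "X1 = C1 - {f}" "C1 \<in> circuits M" "X2 = C2 - {f}" "C2 \<in> circuits M"
    using circuits_contr_seriesE[OF M fg X(1)] circuits_contr_seriesE[OF M fg X(2)] by metis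
  then obtain C3 where C3: "C3 \<in> circuits M" "C3 \<subseteq> (C1 \<union> C2) - {x}"
    using matroid_circuit_elim[OF M C(2,4), of x] X(3,4) by blast
  have "C3 - {f} \<subseteq> (X1 \<union> X2) - {x}" using C3(2) C(1,3) by blast
  then show "\<exists>X3\<in>circuits (contr M f). X3 \<subseteq> (X1 \<union> X2) - {x}"
    using diff_in_circuits_contr_series[OF M fg C3(1)] by blast
qed

lemma sym_strong_elim_contr_series:
  assumes M: "matroid M" and fg: "cocircuit M {f, g}" and S: "sym_strong_elim M"
  shows "sym_strong_elim (contr M f)"
  unfolding sym_strong_elim_def
proof (intro ballI allI impI)
  fix X1 X2 e1 e2 x
  assume X: "X1 \<in> circuits (contr M f)" "X2 \<in> circuits (contr M f)"
    "e1 \<in> X1 - X2 \<and> e2 \<in> X2 - X1 \<and> x \<in> X1 \<inter> X2"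
  obtain C1 C2 where C: "X1 = C1 - {f}" "C1 \<in> circuits M" "X2 = C2 - {f}" "C2 \<in> circuits M"
    using circuits_contr_seriesE[OF M fg X(1)] circuits_contr_seriesE[OF M fg X(2)] by metis
  then have "e1 \<in> C1 - C2" "e2 \<in> C2 - C1" "x \<in> C1 \<inter> C2" using X(3) by auto
  then obtain C3 where C3: "C3 \<in> circuits M" "{e1, e2} \<subseteq> C3" "C3 \<subseteq> (C1 \<union> C2) - {x}"
    using sym_strong_elimD[OF S C(2,4)] by blast
  have "{e1, e2} \<subseteq> C3 - {f}" "C3 - {f} \<subseteq> (X1 \<union> X2) - {x}" using C3(2,3) C(1,3) X(3) by auto
  then show "\<exists>X3\<in>circuits (contr M f). {e1, e2} \<subseteq> X3 \<and> X3 \<subseteq> (X1 \<union> X2) - {x}"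
    using diff_in_circuits_contr_series[OF M fg C3(1)] by blast
qed

lemma series_minor_matroid: "series_minor M N \<Longrightarrow> matroid M \<Longrightarrow> matroid N"
proof (induction rule: series_minor.induct)
  case (delete M N e)
  then show ?case by (simp add: matroid_del)
next
  case (series_contract M N f g)
  then show ?case by (simp add: matroid_contr_series)
qed

lemma series_minor_sym_strong_elim:
  "series_minor M N \<Longrightarrow> matroid M \<Longrightarrow> sym_strong_elim M \<Longrightarrow> sym_strong_elim N"
proof (induction rule: series_minor.induct)
  case (delete M N e)
  then show ?case by (simp add: sym_strong_elim_del)
next
  case (series_contract M N f g)
  then show ?case
    using sym_strong_elim_contr_series[OF series_minor_matroid] by simp
qed

theorem lemma2p1:
  assumes "matroid M" and "sym_strong_elim M" and "series_minor M N"
  shows "sym_strong_elim N"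
  using series_minor_sym_strong_elim[OF assms(3,1,2)] .

end
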